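(* Let $\Delta \ge 3$ be an integer and let $\varepsilon > 0$. There is no local algorithm that, on every weakly $2$-coloured graph $\mathcal{G}$ of maximum degree at most $\Delta$ (with the weak colouring given as input), outputs a matching $M$ of $\mathcal{G}$ with $|M^*| \le \bigl(\tfrac{\Delta+1}{2}-\varepsilon\bigr)|M|$, where $M^*$ is a maximum matching of $\mathcal{G}$. This holds even if the nodes have unique identifiers from $\{1,\dots,|V|\}$, know $|V|$, and messages and local computation are unbounded.
   Context: Model: a graph $\mathcal{G}=(V,E)$ without isolated nodes is a distributed system; every node runs the same deterministic algorithm. Communication is synchronous: in each round every node receives messages from its neighbours, performs local computation, and sends messages to its neighbours. Each node knows its degree, its own input label (e.g. its colour), and the global degree bound $\Delta$. A local algorithm is one that terminates after $T$ rounds, where $T$ may depend on $\Delta$ but not on the number of nodes; its output at a node is whether the node belongs to the solution (for edge problems, which incident edges belong to it). A weak $2$-colouring assigns each node black or white so that every non-isolated node has at least one neighbour of the opposite colour; it is given as input. An algorithm has approximation factor $\alpha$ for a maximisation problem if its output is always feasible with size at least $1/\alpha$ times the optimum. *)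

theory Defs
  imports Complex_Main
begin

text \<open>Graphs on vertex set {1..n}; vertex names serve as the unique identifiers.
  E is the (symmetric, irreflexive) adjacency relation.\<close>

definition valid_graph :: "nat \<Rightarrow> nat \<Rightarrow> (nat \<Rightarrow> nat \<Rightarrow> bool) \<Rightarrow> bool" where
  "valid_graph \<Delta> n E \<longleftrightarrow>
     (\<forall>u v. E u v \<longrightarrow> u \<in> {1..n} \<and> v \<in> {1..n} \<and> u \<noteq> v \<and> E v u)
   \<and> (\<forall>v\<in>{1..n}. \<exists>u. E v u)
   \<and> (\<forall>v\<in>{1..n}. card {u. E v u} \<le> \<Delta>)"

text \<open>Weak 2-colouring (True = black, False = white).\<close>
definition weak_2_colouring :: "nat \<Rightarrow> (nat \<Rightarrow> nat \<Rightarrow> bool) \<Rightarrow> (nat \<Rightarrow> bool) \<Rightarrow> bool" where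
  "weak_2_colouring n E c \<longleftrightarrow> (\<forall>v\<in>{1..n}. \<exists>u. E v u \<and> c u \<noteq> c v)"

definition wc_instance :: "nat \<Rightarrow> nat \<Rightarrow> (nat \<Rightarrow> nat \<Rightarrow> bool) \<Rightarrow> (nat \<Rightarrow> bool) \<Rightarrow> bool" where
  "wc_instance \<Delta> n E c \<longleftrightarrow> valid_graph \<Delta> n E \<and> weak_2_colouring n E c"

primrec reach_le :: "(nat \<Rightarrow> nat \<Rightarrow> bool) \<Rightarrow> nat \<Rightarrow> nat \<Rightarrow> nat \<Rightarrow> bool" where
  "reach_le E 0 v u \<longleftrightarrow> u = v"
| "reach_le E (Suc r) v u \<longleftrightarrow> reach_le E r v u \<or> (\<exists>w. reach_le E r v w \<and> E w u)"

text \<open>An algorithm maps (n, graph, colouring, node v) to the set of neighbours u of v such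
  that v declares the edge {v,u} to be in the output.  It is local with radius r if, on
  valid instances with the same n, the output of v depends only on the colours and
  neighbourhoods (neighbour identifiers) of the nodes reach_le distance r of v.  This is
  (up to shifting r by one) exactly the information available after r synchronous rounds
  with unbounded messages and computation, unique identifiers and knowledge of n.\<close>
type_synonym algorithm = "nat \<Rightarrow> (nat \<Rightarrow> nat \<Rightarrow> bool) \<Rightarrow> (nat \<Rightarrow> bool) \<Rightarrow> nat \<Rightarrow> nat set"

definition local_alg :: "nat \<Rightarrow> nat \<Rightarrow> algorithm \<Rightarrow> bool" where
  "local_alg \<Delta> r A \<longleftrightarrow>
     (\<forall>n E c E' c' v. wc_instance \<Delta> n E c \<longrightarrow> wc_instance \<Delta> n E' c' \<longrightarrow> v \<in> {1..n} \<longrightarrow>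
        (\<forall>u. reach_le E r v u \<longrightarrow> (\<forall>w. E u w = E' u w) \<and> c u = c' u) \<longrightarrow>
        A n E c v = A n E' c' v)"

definition edges :: "(nat \<Rightarrow> nat \<Rightarrow> bool) \<Rightarrow> nat set set" where
  "edges E = {{u, v} | u v. E u v}"

definition matching :: "(nat \<Rightarrow> nat \<Rightarrow> bool) \<Rightarrow> nat set set \<Rightarrow> bool" where
  "matching E M \<longleftrightarrow> M \<subseteq> edges E \<and> (\<forall>e\<in>M. \<forall>f\<in>M. e \<noteq> f \<longrightarrow> e \<inter> f = {})"

definition max_matching_size :: "(nat \<Rightarrow> nat \<Rightarrow> bool) \<Rightarrow> nat" where
  "max_matching_size E = Max (card ` {M. matching E M})"

definition output_edges :: "algorithm \<Rightarrow> nat \<Rightarrow> (nat \<Rightarrow> nat \<Rightarrow> bool) \<Rightarrow> (nat \<Rightarrow> bool) \<Rightarrow> nat set set" where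
  "output_edges A n E c = {{u, v} | u v. E u v \<and> v \<in> A n E c u \<and> u \<in> A n E c v}"

definition approx_matching_alg :: "nat \<Rightarrow> real \<Rightarrow> algorithm \<Rightarrow> bool" where
  "approx_matching_alg \<Delta> \<alpha> A \<longleftrightarrow>
     (\<forall>n E c. wc_instance \<Delta> n E c \<longrightarrow>
        (\<forall>v\<in>{1..n}. A n E c v \<subseteq> {u. E v u})
      \<and> (\<forall>u v. E u v \<longrightarrow> (v \<in> A n E c u \<longleftrightarrow> u \<in> A n E c v))
      \<and> matching E (output_edges A n E c)
      \<and> real (max_matching_size E) \<le> \<alpha> * real (card (output_edges A n E c)))"

end

theory Submission
  imports Defs "HOL-Library.Ramsey"
begin

(* Proof idea (a Ramsey argument in the style of Naor and Stockmeyer).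
   For a permutation ps of {0..<L} we build a hard instance: L gadgets, each a star whose
   centre (slot 0, white) is joined to D leaves (slots 1..D, black), and for each slot a >= 1
   a "layer" path through the a-th leaves of the gadgets in the order given by ps.  Every
   such graph is a valid weakly 2-coloured instance of maximum degree D, and its maximum
   matching has at least L (D + 1) / 2 edges (all spokes to slot 1 plus perfect matchings of
   layers 2..D).
   A radius-r algorithm sees at a middle position only a window of 2(r+1)+1 consecutive
   gadget labels.  Colouring every such label set by the choices the algorithm makes there
   and applying Ramsey's theorem repeatedly, we arrange the labels of ps in blocks that are
   homogeneous for this colouring.  Inside a block the algorithm behaves identically at
   neighbouring positions, so a matching output cannot use any layer edge deep inside a
   block.  Hence every output edge meets a centre or a leaf near a block boundary, and the
   output has only L + o(L) edges, contradicting the approximation ratio (D + 1)/2 - eps. *)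

(* Vertex u = node D x a is slot a of the gadget labelled x; the vertices of L gadgets are
   1..L(D+1), and gadget/slot decode a vertex. *)
definition node :: "nat \<Rightarrow> nat \<Rightarrow> nat \<Rightarrow> nat" where
  "node D x a = x * Suc D + a + 1"

definition gadget :: "nat \<Rightarrow> nat \<Rightarrow> nat" where
  "gadget D u = (u - 1) div Suc D"

definition slot :: "nat \<Rightarrow> nat \<Rightarrow> nat" where
  "slot D u = (u - 1) mod Suc D"

lemma gadget_node [simp]: "a \<le> D \<Longrightarrow> gadget D (node D x a) = x"
  unfolding gadget_def node_def by (simp del: mult_Suc_right)

lemma slot_node [simp]: "a \<le> D \<Longrightarrow> slot D (node D x a) = a"
  unfolding slot_def node_def by (simp del: mult_Suc_right)

lemma node_inj: "a \<le> D \<Longrightarrow> b \<le> D \<Longrightarrow> node D x a = node D y b \<longleftrightarrow> x = y \<and> a = b"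
  by (metis gadget_node slot_node)

lemma node_ge1 [simp]: "1 \<le> node D x a"
  unfolding node_def by simp

lemma node_le: "a \<le> D \<Longrightarrow> node D x a \<le> L * Suc D \<longleftrightarrow> x < L"
proof
  assume "a \<le> D" "node D x a \<le> L * Suc D"
  then have "x * Suc D < L * Suc D" unfolding node_def by linarith
  then show "x < L" by (metis mult_less_cancel2)
next
  assume a: "a \<le> D" "x < L"
  then have "Suc x * Suc D \<le> L * Suc D" by (intro mult_le_mono1) simp
  then show "node D x a \<le> L * Suc D" using a unfolding node_def by simp
qed

lemma node_surj:
  assumes u: "1 \<le> u" "u \<le> L * Suc D"
  shows "u = node D (gadget D u) (slot D u) \<and> gadget D u < L \<and> slot D u \<le> D"
proof -
  have e: "u = node D (gadget D u) (slot D u)" unfolding node_def gadget_def slot_def using u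
    by (metis Suc_eq_plus1 add.commute le_add_diff_inverse mod_div_mult_eq)
  have "slot D u \<le> D" unfolding slot_def using less_Suc_eq_le by auto
  moreover then have "gadget D u < L" using node_le[of "slot D u" D "gadget D u" L] e u by simp
  ultimately show ?thesis using e by simp
qed

definition is_perm :: "nat list \<Rightarrow> bool" where
  "is_perm ps \<longleftrightarrow> distinct ps \<and> set ps = {0..<length ps}"

definition position :: "nat list \<Rightarrow> nat \<Rightarrow> nat" where
  "position ps x = (THE i. i < length ps \<and> ps ! i = x)"

lemma position_nth: "is_perm ps \<Longrightarrow> i < length ps \<Longrightarrow> position ps (ps ! i) = i"
  unfolding position_def is_perm_def by (rule the_equality) (auto simp: nth_eq_iff_index_eq)

lemma nth_position:
  assumes p: "is_perm ps" "x < length ps"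
  shows "position ps x < length ps \<and> ps ! (position ps x) = x"
proof -
  obtain i where i: "i < length ps" "ps ! i = x" using p unfolding is_perm_def
    by (metis atLeastLessThan_iff in_set_conv_nth zero_le)
  thus ?thesis using position_nth[OF p(1) i(1)] by simp
qed

lemma position_eq_iff:
  "is_perm ps \<Longrightarrow> y < length ps \<Longrightarrow> j < length ps \<Longrightarrow> position ps y = j \<longleftrightarrow> y = ps ! j"
  using nth_position position_nth by metis

lemma nth_lt: "is_perm ps \<Longrightarrow> i < length ps \<Longrightarrow> ps ! i < length ps"
  unfolding is_perm_def by (metis atLeastLessThan_iff nth_mem)

lemma nth_inj: "is_perm ps \<Longrightarrow> i < length ps \<Longrightarrow> j < length ps \<Longrightarrow> ps ! i = ps ! j \<longleftrightarrow> i = j"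
  by (meson is_perm_def nth_eq_iff_index_eq)

definition gadget_graph :: "nat \<Rightarrow> nat list \<Rightarrow> nat \<Rightarrow> nat \<Rightarrow> bool" where
  "gadget_graph D ps u v \<longleftrightarrow>
     1 \<le> u \<and> u \<le> length ps * Suc D \<and> 1 \<le> v \<and> v \<le> length ps * Suc D \<and>
     ((gadget D u = gadget D v \<and> (slot D u = 0) \<noteq> (slot D v = 0)) \<or>
      (slot D u = slot D v \<and> slot D u \<noteq> 0 \<and>
       (position ps (gadget D v) = Suc (position ps (gadget D u)) \<or>
        position ps (gadget D u) = Suc (position ps (gadget D v)))))"

definition slot_colour :: "nat \<Rightarrow> nat \<Rightarrow> bool" where
  "slot_colour D u = (slot D u \<noteq> 0)"

lemma graph_node:
  assumes ab: "a \<le> D" "b \<le> D"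
  shows "gadget_graph D ps (node D x a) (node D y b) \<longleftrightarrow> x < length ps \<and> y < length ps \<and>
    ((x = y \<and> (a = 0) \<noteq> (b = 0)) \<or>
     (a = b \<and> a \<noteq> 0 \<and> (position ps y = Suc (position ps x) \<or> position ps x = Suc (position ps y))))"
proof -
  have "(1 \<le> node D x a \<and> node D x a \<le> length ps * Suc D \<and>
         1 \<le> node D y b \<and> node D y b \<le> length ps * Suc D) \<longleftrightarrow> x < length ps \<and> y < length ps"
    using node_le[OF ab(1), of x "length ps"] node_le[OF ab(2), of y "length ps"] node_ge1 by blast
  then show ?thesis
    unfolding gadget_graph_def gadget_node[OF ab(1)] gadget_node[OF ab(2)]
      slot_node[OF ab(1)] slot_node[OF ab(2)] by blast
qed

definition vertex_at :: "nat \<Rightarrow> nat list \<Rightarrow> nat \<Rightarrow> nat \<Rightarrow> nat" where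
  "vertex_at D ps p a = node D (ps ! p) a"

lemma graph_vertex_at:
  "is_perm ps \<Longrightarrow> p < length ps \<Longrightarrow> q < length ps \<Longrightarrow> a \<le> D \<Longrightarrow> b \<le> D \<Longrightarrow>
   gadget_graph D ps (vertex_at D ps p a) (vertex_at D ps q b) \<longleftrightarrow>
     (p = q \<and> (a = 0) \<noteq> (b = 0)) \<or> (a = b \<and> a \<noteq> 0 \<and> (q = Suc p \<or> p = Suc q))"
  unfolding vertex_at_def by (simp add: graph_node nth_lt position_nth nth_inj)

lemma vertex_at_inj:
  "is_perm ps \<Longrightarrow> p < length ps \<Longrightarrow> q < length ps \<Longrightarrow> a \<le> D \<Longrightarrow> b \<le> D \<Longrightarrow>
   vertex_at D ps p a = vertex_at D ps q b \<longleftrightarrow> p = q \<and> a = b"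
  unfolding vertex_at_def by (simp add: node_inj nth_inj)

lemma vertex_at_surj:
  assumes ip: "is_perm ps" and u: "1 \<le> u" "u \<le> length ps * Suc D"
  shows "\<exists>p<length ps. \<exists>a\<le>D. u = vertex_at D ps p a"
proof -
  from node_surj[OF u] have u: "u = node D (gadget D u) (slot D u)" "gadget D u < length ps" "slot D u \<le> D"
    by auto
  from nth_position[OF ip u(2)] show ?thesis unfolding vertex_at_def using u by metis
qed

lemma graph_range:
  "gadget_graph D ps u v \<Longrightarrow> 1 \<le> u \<and> u \<le> length ps * Suc D \<and> 1 \<le> v \<and> v \<le> length ps * Suc D"
  unfolding gadget_graph_def by simp

lemma graph_sym: "gadget_graph D ps u v \<Longrightarrow> gadget_graph D ps v u"
  unfolding gadget_graph_def by auto

lemma graph_irrefl: "gadget_graph D ps u v \<Longrightarrow> u \<noteq> v"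
  unfolding gadget_graph_def by auto

lemma vertex_at_range:
  "is_perm ps \<Longrightarrow> p < length ps \<Longrightarrow> a \<le> D \<Longrightarrow>
   1 \<le> vertex_at D ps p a \<and> vertex_at D ps p a \<le> length ps * Suc D"
  unfolding vertex_at_def using node_le nth_lt node_ge1 by simp

lemma colour_vertex_at [simp]: "a \<le> D \<Longrightarrow> slot_colour D (vertex_at D ps p a) = (a \<noteq> 0)"
  unfolding slot_colour_def vertex_at_def by simp

(* Every vertex has a neighbour of the other colour: a centre is adjacent to its slot-1 leaf
   and every leaf to its centre. *)
lemma gadget_graph_opposite_neighbour:
  assumes ip: "is_perm ps" and D1: "1 \<le> D" and v: "v \<in> {1..length ps * Suc D}"
  shows "\<exists>u. gadget_graph D ps v u \<and> slot_colour D u \<noteq> slot_colour D v"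
proof -
  obtain p a where pa: "p < length ps" "a \<le> D" "v = vertex_at D ps p a"
    using vertex_at_surj[OF ip, of v D] v by auto
  define b :: nat where "b = (if a = 0 then 1 else 0)"
  have b: "b \<le> D" "(b = 0) \<noteq> (a = 0)" using D1 unfolding b_def by auto
  have "gadget_graph D ps v (vertex_at D ps p b)"
    using graph_vertex_at[OF ip pa(1) pa(1) pa(2) b(1)] pa(3) b(2) by simp
  then show ?thesis using pa b by (intro exI[of _ "vertex_at D ps p b"]) auto
qed

(* A centre is adjacent exactly to its D leaves; a leaf to its centre and to at most two
   leaves of its layer path.  Hence all degrees are at most D once D \<ge> 3. *)
lemma gadget_graph_degree:
  assumes ip: "is_perm ps" and D3: "3 \<le> D" and v: "v \<in> {1..length ps * Suc D}"
  shows "card {u. gadget_graph D ps v u} \<le> D"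
proof -
  obtain p a where pa: "p < length ps" "a \<le> D" "v = vertex_at D ps p a"
    using vertex_at_surj[OF ip, of v D] v by auto
  have nbr: "\<exists>q b. u = vertex_at D ps q b \<and> b \<le> D \<and>
      ((p = q \<and> (a = 0) \<noteq> (b = 0)) \<or> (a = b \<and> a \<noteq> 0 \<and> (q = Suc p \<or> p = Suc q)))"
    if vu: "gadget_graph D ps v u" for u
  proof -
    obtain q b where qb: "q < length ps" "b \<le> D" "u = vertex_at D ps q b"
      using vertex_at_surj[OF ip] graph_range[OF vu] by blast
    then show ?thesis using vu graph_vertex_at[OF ip pa(1) qb(1) pa(2) qb(2)] pa(3) by auto
  qed
  show ?thesis
  proof (cases "a = 0")
    case True
    have "{u. gadget_graph D ps v u} \<subseteq> (\<lambda>b. vertex_at D ps p b) ` {1..D}"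
    proof
      fix u assume "u \<in> {u. gadget_graph D ps v u}"
      then obtain b where "u = vertex_at D ps p b" "1 \<le> b" "b \<le> D" using nbr True by force
      then show "u \<in> (\<lambda>b. vertex_at D ps p b) ` {1..D}" by auto
    qed
    then have "card {u. gadget_graph D ps v u} \<le> card ((\<lambda>b. vertex_at D ps p b) ` {1..D})"
      by (intro card_mono) auto
    also have "\<dots> \<le> D" using card_image_le[of "{1..D}" "\<lambda>b. vertex_at D ps p b"] by simp
    finally show ?thesis .
  next
    case False
    have "{u. gadget_graph D ps v u} \<subseteq>
        {vertex_at D ps p 0, vertex_at D ps (Suc p) a, vertex_at D ps (p - 1) a}"
    proof
      fix u assume "u \<in> {u. gadget_graph D ps v u}"
      then obtain q b where "u = vertex_at D ps q b"
          "(p = q \<and> b = 0) \<or> (a = b \<and> (q = Suc p \<or> p = Suc q))"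
        using nbr False by force
      then show "u \<in> {vertex_at D ps p 0, vertex_at D ps (Suc p) a, vertex_at D ps (p - 1) a}"
        by auto
    qed
    then have "card {u. gadget_graph D ps v u} \<le>
        card {vertex_at D ps p 0, vertex_at D ps (Suc p) a, vertex_at D ps (p - 1) a}"
      by (intro card_mono) auto
    also have "\<dots> \<le> 3" by (simp add: card_insert_le_m1)
    finally show ?thesis using D3 by simp
  qed
qed

lemma gadget_graph_instance:
  assumes ip: "is_perm ps" and D3: "3 \<le> D"
  shows "wc_instance D (length ps * Suc D) (gadget_graph D ps) (slot_colour D)"
proof -
  have "1 \<le> D" using D3 by simp
  note nbr = gadget_graph_opposite_neighbour[OF ip this]
  have edges: "\<forall>u v. gadget_graph D ps u v \<longrightarrow> u \<in> {1..length ps * Suc D} \<and>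
      v \<in> {1..length ps * Suc D} \<and> u \<noteq> v \<and> gadget_graph D ps v u"
    using graph_range graph_sym graph_irrefl by simp
  show ?thesis
    unfolding wc_instance_def valid_graph_def weak_2_colouring_def
    using edges nbr gadget_graph_degree[OF ip D3] by blast
qed

lemma matching_of_pairs:
  assumes E: "\<And>i. i \<in> I \<Longrightarrow> E (f i) (g i)"
    and inj: "inj_on f I" "inj_on g I" and disj: "f ` I \<inter> g ` I = {}"
  shows "matching E ((\<lambda>i. {f i, g i}) ` I)" and "card ((\<lambda>i. {f i, g i}) ` I) = card I"
proof -
  have apart: "{f i, g i} \<inter> {f j, g j} = {}" if "i \<in> I" "j \<in> I" "i \<noteq> j" for i j
    using that inj disj unfolding inj_on_def by blast
  show "matching E ((\<lambda>i. {f i, g i}) ` I)"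
    unfolding matching_def edges_def using E apart by blast
  have "inj_on (\<lambda>i. {f i, g i}) I"
    using apart by (intro inj_onI) blast
  then show "card ((\<lambda>i. {f i, g i}) ` I) = card I" by (rule card_image)
qed

lemma card_le_max_matching_size:
  assumes V: "\<And>u v. E u v \<Longrightarrow> u \<in> V \<and> v \<in> V" and fV: "finite V" and M: "matching E M"
  shows "card M \<le> max_matching_size E"
proof -
  have "edges E \<subseteq> Pow V" unfolding edges_def using V by blast
  then have "finite (Pow (edges E))" using fV by (simp add: finite_subset)
  moreover have "{M. matching E M} \<subseteq> Pow (edges E)" unfolding matching_def by blast
  ultimately have "finite {M. matching E M}" by (rule finite_subset[rotated])
  then show ?thesis unfolding max_matching_size_def using M by (intro Max_ge) auto
qed

(* The optimum is large: all L spokes (centre, slot 1) together with a perfect matching of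
   each of the layers 2..D, which pairs positions 2k and 2k+1, give L + (D-1) L/2 edges. *)
lemma max_matching_lower_bound:
  assumes ip: "is_perm ps" and ev: "even (length ps)" and D2: "2 \<le> D"
  shows "real (length ps) * ((real D + 1) / 2) \<le> real (max_matching_size (gadget_graph D ps))"
proof -
  define h where "h = length ps div 2"
  have L: "length ps = 2 * h" using ev unfolding h_def by simp
  define I where "I = {..<2 * h} \<times> {1} \<union> {..<h} \<times> {2..D}"
  define f where "f = (\<lambda>(k, a). if a = 1 then vertex_at D ps k 0 else vertex_at D ps (2 * k) a)"
  define g where "g = (\<lambda>(k, a). if a = 1 then vertex_at D ps k 1 else vertex_at D ps (Suc (2 * k)) a)"
  have eq: "vertex_at D ps p a = vertex_at D ps q b \<longleftrightarrow> p = q \<and> a = b"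
    if "p < 2 * h" "q < 2 * h" "a \<le> D" "b \<le> D" for p q a b
    using vertex_at_inj[OF ip, of p q a D b] that L by simp
  have E: "gadget_graph D ps (f i) (g i)" if "i \<in> I" for i
    using that graph_vertex_at[OF ip] L D2 unfolding I_def f_def g_def by auto
  have inj: "inj_on f I" "inj_on g I" and disj: "f ` I \<inter> g ` I = {}"
    unfolding inj_on_def I_def f_def g_def using eq D2 by (auto split: if_splits) presburger+
  note pairs = matching_of_pairs[where E = "gadget_graph D ps" and f = f and g = g and I = I, OF E inj disj]
  have "card I = 2 * h + h * (D - 1)"
    unfolding I_def by (subst card_Un_disjoint) (auto simp: card_cartesian_product)
  moreover have "card ((\<lambda>i. {f i, g i}) ` I) \<le> max_matching_size (gadget_graph D ps)"
    using graph_range pairs(1)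
    by (intro card_le_max_matching_size[where V = "{1..length ps * Suc D}"]) auto
  ultimately have "2 * h + h * (D - 1) \<le> max_matching_size (gadget_graph D ps)"
    using pairs(2) by simp
  then have "real (2 * h + h * (D - 1)) \<le> real (max_matching_size (gadget_graph D ps))"
    by linarith
  then have "real (2 * h) + real h * (real D - 1) \<le> real (max_matching_size (gadget_graph D ps))"
    using D2 by (simp add: of_nat_diff)
  then show ?thesis unfolding L by (simp add: algebra_simps)
qed

lemma reach_positions:
  assumes ip: "is_perm ps" and pL: "p < length ps" and aD: "a \<le> D"
  shows "reach_le (gadget_graph D ps) r (vertex_at D ps p a) u \<Longrightarrow>
     \<exists>q b. q < length ps \<and> b \<le> D \<and> u = vertex_at D ps q b \<and> q \<le> p + r \<and> p \<le> q + r"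
proof (induction r arbitrary: u)
  case 0
  then show ?case using pL aD by auto
next
  case (Suc r)
  from Suc.prems have "reach_le (gadget_graph D ps) r (vertex_at D ps p a) u \<or>
      (\<exists>w. reach_le (gadget_graph D ps) r (vertex_at D ps p a) w \<and> gadget_graph D ps w u)"
    by simp
  then show ?case
  proof
    assume h: "reach_le (gadget_graph D ps) r (vertex_at D ps p a) u"
    from Suc.IH[OF h] obtain q b
      where "q < length ps" "b \<le> D" "u = vertex_at D ps q b" "q \<le> p + r" "p \<le> q + r" by blast
    then show ?thesis by (intro exI[of _ q] exI[of _ b]) auto
  next
    assume "\<exists>w. reach_le (gadget_graph D ps) r (vertex_at D ps p a) w \<and> gadget_graph D ps w u"
    then obtain w where w: "reach_le (gadget_graph D ps) r (vertex_at D ps p a) w" "gadget_graph D ps w u"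
      by blast
    obtain q b where qb: "q < length ps" "b \<le> D" "w = vertex_at D ps q b" "q \<le> p + r" "p \<le> q + r"
      using Suc.IH[OF w(1)] by blast
    obtain q' b' where qb': "q' < length ps" "b' \<le> D" "u = vertex_at D ps q' b'"
      using vertex_at_surj[OF ip, of u D] graph_range[OF w(2)] by blast
    have "q' \<le> Suc q \<and> q \<le> Suc q'"
      using graph_vertex_at[OF ip qb(1) qb'(1) qb(2) qb'(2)] w(2) qb qb' by auto
    then show ?thesis using qb qb' by (intro exI[of _ q'] exI[of _ b']) auto
  qed
qed

lemma window_position_shift:
  assumes ip: "is_perm ps" and ip': "is_perm ps'" and len: "length ps' = length ps"
    and s: "s + W < length ps" and s': "s' + W < length ps"
    and win: "\<forall>i \<le> W. ps ! (s + i) = ps' ! (s' + i)"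
    and y: "y < length ps" and j: "j \<le> W"
  shows "position ps y = s + j \<longleftrightarrow> position ps' y = s' + j"
proof -
  have "position ps y = s + j \<longleftrightarrow> y = ps ! (s + j)"
    using position_eq_iff[OF ip y, of "s + j"] s j by simp
  also have "\<dots> \<longleftrightarrow> y = ps' ! (s' + j)" using win j by simp
  also have "\<dots> \<longleftrightarrow> position ps' y = s' + j"
    using position_eq_iff[OF ip', of y "s' + j"] s' j y len by simp
  finally show ?thesis .
qed

lemma window_neighbourhood:
  assumes ip: "is_perm ps" and ip': "is_perm ps'" and len: "length ps' = length ps"
    and s: "s + W < length ps" and s': "s' + W < length ps"
    and win: "\<forall>i \<le> W. ps ! (s + i) = ps' ! (s' + i)"
    and i: "1 \<le> i" "i < W" and b: "b \<le> D"
  shows "gadget_graph D ps (vertex_at D ps (s + i) b) w \<longleftrightarrow>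
         gadget_graph D ps' (vertex_at D ps (s + i) b) w"
proof (cases "1 \<le> w \<and> w \<le> length ps * Suc D")
  case False
  then show ?thesis using graph_range len by metis
next
  case True
  define x where "x = ps ! (s + i)"
  obtain y c where w: "w = node D y c" "y < length ps" "c \<le> D"
    using node_surj[of w "length ps" D] True by blast
  note shift = window_position_shift[OF ip ip' len s s' win w(2)]
  have x': "x = ps' ! (s' + i)" unfolding x_def using win[rule_format, of i] i by simp
  have px: "position ps x = s + i"
    using position_nth[OF ip, of "s + i"] s i unfolding x_def by simp
  have px': "position ps' x = s' + i"
    using position_nth[OF ip', of "s' + i"] s' i len unfolding x' by simp
  have right: "position ps y = Suc (position ps x) \<longleftrightarrow> position ps' y = Suc (position ps' x)"
    using shift[of "Suc i"] px px' i by simp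
  have left: "position ps x = Suc (position ps y) \<longleftrightarrow> position ps' x = Suc (position ps' y)"
    using shift[of "i - 1"] px px' i by auto
  show ?thesis
    unfolding vertex_at_def x_def[symmetric] w(1) graph_node[OF b w(3)] using right left len by simp
qed

(* Locality: if ps and ps' agree on the 2(r+1)+1 positions around the middle position
   s + r + 1, every vertex at that position produces the same output in both graphs,
   because its radius-r ball stays strictly inside the window. *)
lemma local_output_window:
  assumes la: "local_alg D r A" and D3: "3 \<le> D" and ip: "is_perm ps" and ip': "is_perm ps'"
    and len: "length ps' = length ps"
    and s: "s + 2 * Suc r < length ps" and s': "s' + 2 * Suc r < length ps"
    and win: "\<forall>i \<le> 2 * Suc r. ps ! (s + i) = ps' ! (s' + i)" and aD: "a \<le> D"
  shows "A (length ps * Suc D) (gadget_graph D ps) (slot_colour D) (vertex_at D ps (s + Suc r) a) =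
         A (length ps * Suc D) (gadget_graph D ps') (slot_colour D) (vertex_at D ps (s + Suc r) a)"
proof -
  let ?n = "length ps * Suc D"
  let ?v = "vertex_at D ps (s + Suc r) a"
  have w1: "wc_instance D ?n (gadget_graph D ps) (slot_colour D)"
    using gadget_graph_instance[OF ip D3] .
  have w2: "wc_instance D ?n (gadget_graph D ps') (slot_colour D)"
    using gadget_graph_instance[OF ip' D3] len by simp
  have vr: "?v \<in> {1..?n}" using vertex_at_range[OF ip _ aD, of "s + Suc r"] s by simp
  have "\<forall>w. gadget_graph D ps u w = gadget_graph D ps' u w"
    if ru: "reach_le (gadget_graph D ps) r ?v u" for u
  proof -
    obtain q b where qb: "q < length ps" "b \<le> D" "u = vertex_at D ps q b"
        "q \<le> s + Suc r + r" "s + Suc r \<le> q + r"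
      using reach_positions[OF ip _ aD ru] s by auto
    then have i: "1 \<le> q - s" "q - s < 2 * Suc r" and q: "s + (q - s) = q" by auto
    show ?thesis
      using window_neighbourhood[OF ip ip' len s s' win i qb(2)] qb(3) unfolding q by simp
  qed
  then show ?thesis using la[unfolded local_alg_def, rule_format, OF w1 w2 vr] by blast
qed

lemma matching_card_le_transversal:
  assumes mt: "matching E M" and fT: "finite T" and me: "\<forall>e\<in>M. e \<inter> T \<noteq> {}"
  shows "card M \<le> card T"
proof -
  define f where "f e = (SOME x. x \<in> e \<inter> T)" for e
  have fe: "f e \<in> e \<inter> T" if "e \<in> M" for e
    unfolding f_def using me that by (metis all_not_in_conv someI_ex)
  have dj: "\<forall>e\<in>M. \<forall>g\<in>M. e \<noteq> g \<longrightarrow> e \<inter> g = {}" using mt unfolding matching_def by (rule conjunct2)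
  have inj: "inj_on f M"
  proof (rule inj_onI)
    fix e g assume eg: "e \<in> M" "g \<in> M" "f e = f g"
    show "e = g"
    proof (rule ccontr)
      assume "e \<noteq> g"
      then have "e \<inter> g = {}" using dj eg by blast
      moreover have "f e \<in> e \<inter> g" using fe[OF eg(1)] fe[OF eg(2)] eg(3) by simp
      ultimately show False by blast
    qed
  qed
  have "f ` M \<subseteq> T" using fe by blast
  from card_inj_on_le[OF inj this fT] show ?thesis .
qed

(* The set of vertices that an output edge is forced to meet: all centres, and the leaves
   at positions marked as bad. *)
definition cover :: "nat \<Rightarrow> nat list \<Rightarrow> (nat \<Rightarrow> bool) \<Rightarrow> nat set" where
  "cover D ps bad = (\<lambda>p. vertex_at D ps p 0) ` {..<length ps} \<union>
     (\<lambda>(p, a). vertex_at D ps p a) ` ({p. p < length ps \<and> bad p} \<times> {1..D})"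

lemma card_cover: "card (cover D ps bad) \<le> length ps + card {p. p < length ps \<and> bad p} * D"
proof -
  let ?B = "{p. p < length ps \<and> bad p}"
  have "card (cover D ps bad) \<le>
      card ((\<lambda>p. vertex_at D ps p 0) ` {..<length ps}) +
      card ((\<lambda>(p, a). vertex_at D ps p a) ` (?B \<times> {1..D}))"
    unfolding cover_def by (rule card_Un_le)
  also have "\<dots> \<le> card {..<length ps} + card (?B \<times> {1..D})"
    by (intro add_mono card_image_le) auto
  also have "\<dots> = length ps + card ?B * D" by (simp add: card_cartesian_product)
  finally show ?thesis .
qed

lemma cover_mem:
  assumes "p < length ps" "a \<le> D" "a = 0 \<or> bad p"
  shows "vertex_at D ps p a \<in> cover D ps bad"
proof (cases "a = 0")
  case True
  then show ?thesis using assms unfolding cover_def by auto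
next
  case False
  then have "(p, a) \<in> {p. p < length ps \<and> bad p} \<times> {1..D}" using assms by auto
  then have "vertex_at D ps p a \<in>
      (\<lambda>(p, a). vertex_at D ps p a) ` ({p. p < length ps \<and> bad p} \<times> {1..D})"
    by (rule rev_image_eqI) simp
  then show ?thesis unfolding cover_def by (rule UnI2)
qed

lemma ramsey_hom:
  fixes U :: "'c set"
  assumes "finite U"
  shows "\<exists>N. \<forall>(col :: nat set \<Rightarrow> 'c) X. (\<forall>S. col S \<in> U) \<longrightarrow> finite X \<longrightarrow> card X \<ge> N \<longrightarrow>
           (\<exists>H\<subseteq>X. card H = m \<and> (\<forall>S\<in>[H]\<^bsup>k\<^esup>. \<forall>T\<in>[H]\<^bsup>k\<^esup>. col S = col T))"
proof -
  define K where "K = card U"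
  obtain h where h: "bij_betw h U {0..<K}" using ex_bij_betw_finite_nat[OF assms] K_def by blast
  obtain N :: nat where N: "partn_lst {..<N} (replicate K m) k" using ramsey_full by blast
  show ?thesis
  proof (rule exI[of _ N], intro allI impI)
    fix col :: "nat set \<Rightarrow> 'c" and X :: "nat set"
    assume cU: "\<forall>S. col S \<in> U" and fX: "finite X" and cX: "N \<le> card X"
    obtain g where g: "bij_betw g {0..<card X} X" using ex_bij_betw_nat_finite[OF fX] by blast
    have ginj: "inj_on g {..<N}" using g cX
      by (metis atLeast0LessThan bij_betw_def inj_on_subset lessThan_subset_iff)
    have gim: "g ` {..<N} \<subseteq> X" using g cX
      by (metis atLeast0LessThan bij_betw_def image_mono lessThan_subset_iff)
    define f where "f T = h (col (g ` T))" for T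
    have fK: "f \<in> [{..<N}]\<^bsup>k\<^esup> \<rightarrow> {..<length (replicate K m)}"
      using h cU unfolding f_def bij_betw_def by auto
    obtain i H' where i: "i < length (replicate K m)" and H': "H' \<in> [{..<N}]\<^bsup>(replicate K m ! i)\<^esup>"
      and hom: "f ` [H']\<^bsup>k\<^esup> \<subseteq> {i}"
      using partn_lstE[OF N fK] by blast
    have H'm: "H' \<subseteq> {..<N}" "finite H'" "card H' = m" using H' i by (auto simp: nsets_def)
    have ginjH: "inj_on g H'" using ginj H'm(1) inj_on_subset by blast
    have key: "col S = col T" if ST: "S \<in> [g ` H']\<^bsup>k\<^esup>" "T \<in> [g ` H']\<^bsup>k\<^esup>" for S T
    proof -
      obtain Y where Y: "Y \<in> [H']\<^bsup>k\<^esup>" "S = g ` Y" using nset_image_obtains[OF ST(1) ginjH] by metis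
      obtain Z where Z: "Z \<in> [H']\<^bsup>k\<^esup>" "T = g ` Z" using nset_image_obtains[OF ST(2) ginjH] by metis
      have "h (col S) = h (col T)" using hom Y Z unfolding f_def by auto
      thus ?thesis using h cU unfolding bij_betw_def inj_on_def by blast
    qed
    show "\<exists>H\<subseteq>X. card H = m \<and> (\<forall>S\<in>[H]\<^bsup>k\<^esup>. \<forall>T\<in>[H]\<^bsup>k\<^esup>. col S = col T)"
    proof (rule exI[of _ "g ` H'"], intro conjI)
      show "g ` H' \<subseteq> X" using gim H'm(1) by blast
      show "card (g ` H') = m" using card_image[OF ginjH] H'm(3) by simp
      show "\<forall>S\<in>[g ` H']\<^bsup>k\<^esup>. \<forall>T\<in>[g ` H']\<^bsup>k\<^esup>. col S = col T" using key by blast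
    qed
  qed
qed

lemma homogeneous_blocks:
  assumes mpos: "m > 0"
    and R: "\<forall>X. finite X \<longrightarrow> card X \<ge> N \<longrightarrow> (\<exists>H\<subseteq>X. card H = m \<and> Pr H)"
  shows "finite X \<Longrightarrow> \<exists>Hs Q. (\<forall>H\<in>set Hs. card H = m \<and> Pr H) \<and> card Q < N \<and>
     distinct (concat (map sorted_list_of_set Hs) @ sorted_list_of_set Q) \<and>
     set (concat (map sorted_list_of_set Hs) @ sorted_list_of_set Q) = X"
proof (induction "card X" arbitrary: X rule: less_induct)
  case less
  show ?case
  proof (cases "card X < N")
    case True
    then show ?thesis using less.prems by (intro exI[of _ "[]"] exI[of _ X]) auto
  next
    case False
    then obtain H where H: "H \<subseteq> X" "card H = m" "Pr H" using R less.prems by auto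
    have fH: "finite H" using H mpos card_ge_0_finite by auto
    have cX: "card H \<le> card X" using card_mono[OF less.prems H(1)] .
    have "card (X - H) = card X - card H" using card_Diff_subset[OF fH H(1)] .
    then have lt: "card (X - H) < card X" using H(2) mpos cX by linarith
    obtain Hs Q where IH: "(\<forall>H\<in>set Hs. card H = m \<and> Pr H)" "card Q < N"
      "distinct (concat (map sorted_list_of_set Hs) @ sorted_list_of_set Q)"
      "set (concat (map sorted_list_of_set Hs) @ sorted_list_of_set Q) = X - H"
      using less.hyps[OF lt] less.prems by blast
    show ?thesis
    proof (intro exI[of _ "H # Hs"] exI[of _ Q] conjI)
      show "\<forall>H\<in>set (H # Hs). card H = m \<and> Pr H" using IH H by auto
      show "card Q < N" using IH by auto
      show "distinct (concat (map sorted_list_of_set (H # Hs)) @ sorted_list_of_set Q)"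
        using IH(3,4) fH by auto
      show "set (concat (map sorted_list_of_set (H # Hs)) @ sorted_list_of_set Q) = X"
        using IH(4) fH H by auto
    qed
  qed
qed

lemma concat_len: "(\<forall>xs\<in>set xss. length xs = m) \<Longrightarrow> length (concat xss) = length xss * m"
  by (induction xss) auto

lemma concat_nth: "(\<forall>xs\<in>set xss. length xs = m) \<Longrightarrow> j < length xss \<Longrightarrow> i < m \<Longrightarrow>
   (concat xss @ ys) ! (j * m + i) = xss ! j ! i"
proof (induction xss arbitrary: j)
  case Nil then show ?case by simp
next
  case (Cons xs xss)
  show ?case
  proof (cases j)
    case 0 then show ?thesis using Cons.prems by (simp add: nth_append)
  next
    case (Suc j')
    have "(concat (xs # xss) @ ys) ! (j * m + i) = (xs @ (concat xss @ ys)) ! (m + (j' * m + i))"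
      using Suc by (simp add: algebra_simps)
    also have "\<dots> = (concat xss @ ys) ! (j' * m + i)" using Cons.prems by (simp add: nth_append)
    also have "\<dots> = xss ! j' ! i" using Cons Suc by simp
    finally show ?thesis using Suc by simp
  qed
qed

(* The canonical permutation for a set S of labels lists S in increasing order first; it is
   the reference instance in which a window of labels is placed at the start. *)
definition canonical_perm :: "nat \<Rightarrow> nat set \<Rightarrow> nat list" where
  "canonical_perm L S = sorted_list_of_set S @ sorted_list_of_set ({0..<L} - S)"

lemma canonical_perm_is_perm:
  assumes "S \<subseteq> {0..<L}"
  shows "is_perm (canonical_perm L S)" "length (canonical_perm L S) = L"
proof -
  have fS: "finite S" using assms finite_subset by blast
  have d: "distinct (canonical_perm L S)" unfolding canonical_perm_def using fS by auto
  have st: "set (canonical_perm L S) = {0..<L}" unfolding canonical_perm_def using fS assms by auto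
  have "length (canonical_perm L S) = L" using distinct_card[OF d] st by simp
  then show "is_perm (canonical_perm L S)" "length (canonical_perm L S) = L"
    unfolding is_perm_def using d st by auto
qed

lemma canonical_perm_nth:
  "finite S \<Longrightarrow> i < card S \<Longrightarrow> canonical_perm L S ! i = sorted_list_of_set S ! i"
  unfolding canonical_perm_def by (simp add: nth_append)

definition picks_left :: "nat \<Rightarrow> algorithm \<Rightarrow> nat list \<Rightarrow> nat \<Rightarrow> nat \<Rightarrow> bool" where
  "picks_left D A ps p a \<longleftrightarrow>
     vertex_at D ps (p - 1) a \<in> A (length ps * Suc D) (gadget_graph D ps) (slot_colour D) (vertex_at D ps p a)"

definition picks_right :: "nat \<Rightarrow> algorithm \<Rightarrow> nat list \<Rightarrow> nat \<Rightarrow> nat \<Rightarrow> bool" where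
  "picks_right D A ps p a \<longleftrightarrow>
     vertex_at D ps (Suc p) a \<in> A (length ps * Suc D) (gadget_graph D ps) (slot_colour D) (vertex_at D ps p a)"

lemma path_edge_in_output:
  assumes ip: "is_perm ps" and q: "Suc q < length ps" and a: "1 \<le> a" "a \<le> D"
    and sel: "picks_right D A ps q a" "picks_left D A ps (Suc q) a"
  shows "{vertex_at D ps q a, vertex_at D ps (Suc q) a}
           \<in> output_edges A (length ps * Suc D) (gadget_graph D ps) (slot_colour D)"
proof -
  have "gadget_graph D ps (vertex_at D ps q a) (vertex_at D ps (Suc q) a)"
    using graph_vertex_at[OF ip _ q a(2) a(2)] q a by simp
  then show ?thesis using sel unfolding output_edges_def picks_right_def picks_left_def by fastforce
qed

(* The colour of a (2(r+1)+1)-set S of labels: the layer edges proposed by the middle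
   vertices of the canonical instance of S.  There are finitely many colours. *)
definition choice_pattern :: "nat \<Rightarrow> algorithm \<Rightarrow> nat \<Rightarrow> nat \<Rightarrow> nat set \<Rightarrow> (nat \<times> nat) set" where
  "choice_pattern D A L r S = {(a, d). a \<in> {1..D} \<and> d \<in> {0, 1} \<and>
     (if d = 0 then picks_left D A (canonical_perm L S) (Suc r) a
      else picks_right D A (canonical_perm L S) (Suc r) a)}"

lemma choice_pattern_range: "choice_pattern D A L r S \<in> Pow ({1..D} \<times> {0, 1})"
  unfolding choice_pattern_def by auto

definition interior :: "nat \<Rightarrow> nat \<Rightarrow> nat \<Rightarrow> nat \<Rightarrow> bool" where
  "interior m t R q \<longleftrightarrow> q div m < t \<and> R \<le> q mod m \<and> q mod m + R < m"

definition window :: "nat set list \<Rightarrow> nat \<Rightarrow> nat \<Rightarrow> nat \<Rightarrow> nat set" where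
  "window Hs m R q = set (take (2 * R + 1) (drop (q mod m - R) (sorted_list_of_set (Hs ! (q div m)))))"

lemma card_non_interior:
  assumes tm: "t * m \<le> L" and mpos: "0 < m"
  shows "card {p. p < L \<and> \<not> interior m t K p} \<le> t * (2 * K) + (L - t * m)"
proof -
  let ?ends = "{..<K} \<union> {m - K..<m}"
  let ?B = "{p. p < t * m \<and> p mod m \<in> ?ends}"
  have "{p. p < L \<and> \<not> interior m t K p} \<subseteq> ?B \<union> {t * m..<L}"
  proof
    fix p assume "p \<in> {p. p < L \<and> \<not> interior m t K p}"
    moreover have "p div m < t" if "p < t * m" using that by (simp add: less_mult_imp_div_less)
    ultimately show "p \<in> ?B \<union> {t * m..<L}" using mpos unfolding interior_def by auto
  qed
  moreover have "finite ?B" by (rule finite_subset[of _ "{..<t * m}"]) auto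
  ultimately have total: "card {p. p < L \<and> \<not> interior m t K p} \<le> card ?B + card {t * m..<L}"
    by (meson card_Un_le card_mono finite_Un finite_atLeastLessThan order_trans)
  have "card ?B \<le> card ({..<t} \<times> ?ends)"
  proof (rule card_inj_on_le[of "\<lambda>p. (p div m, p mod m)"])
    show "inj_on (\<lambda>p. (p div m, p mod m)) ?B" by (rule inj_onI) (metis div_mult_mod_eq prod.inject)
    show "(\<lambda>p. (p div m, p mod m)) ` ?B \<subseteq> {..<t} \<times> ?ends" by (auto simp: less_mult_imp_div_less)
  qed simp
  also have "\<dots> \<le> t * (2 * K)"
  proof -
    have "card ?ends \<le> card {..<K} + card {m - K..<m}" by (rule card_Un_le)
    also have "\<dots> \<le> 2 * K" by simp
    finally show ?thesis by (simp add: card_cartesian_product)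
  qed
  finally show ?thesis using total by simp
qed

definition homogeneous_block :: "nat \<Rightarrow> algorithm \<Rightarrow> nat \<Rightarrow> nat \<Rightarrow> nat \<Rightarrow> nat set \<Rightarrow> bool" where
  "homogeneous_block D A L r m H \<longleftrightarrow> card H = m \<and>
     (\<forall>S\<in>[H]\<^bsup>(2 * Suc r + 1)\<^esup>. \<forall>T\<in>[H]\<^bsup>(2 * Suc r + 1)\<^esup>.
        choice_pattern D A L r S = choice_pattern D A L r T)"

lemma homogeneous_arrangement:
  assumes mpos: "0 < m"
  obtains N :: nat where "\<And>L. \<exists>Hs Q. (\<forall>H\<in>set Hs. homogeneous_block D A L r m H) \<and> card Q < N \<and>
      distinct (concat (map sorted_list_of_set Hs) @ sorted_list_of_set Q) \<and>
      set (concat (map sorted_list_of_set Hs) @ sorted_list_of_set Q) = {0..<L}"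
proof -
  have "finite (Pow ({1..D} \<times> {0, 1::nat}))" by simp
  from ramsey_hom[OF this, of m "2 * Suc r + 1"] obtain N where N:
    "\<forall>(col :: nat set \<Rightarrow> (nat \<times> nat) set) (X :: nat set). (\<forall>S. col S \<in> Pow ({1..D} \<times> {0, 1::nat})) \<longrightarrow>
       finite X \<longrightarrow> N \<le> card X \<longrightarrow>
       (\<exists>H\<subseteq>X. card H = m \<and> (\<forall>S\<in>[H]\<^bsup>(2 * Suc r + 1)\<^esup>. \<forall>T\<in>[H]\<^bsup>(2 * Suc r + 1)\<^esup>. col S = col T))"
    by blast
  show ?thesis
  proof (rule that[of N])
    fix L
    have "\<exists>H\<subseteq>X. homogeneous_block D A L r m H" if "finite X" "N \<le> card X" for X
      using N[rule_format, of "choice_pattern D A L r" X] choice_pattern_range that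
      unfolding homogeneous_block_def by blast
    then have "\<forall>X. finite X \<longrightarrow> N \<le> card X \<longrightarrow> (\<exists>H\<subseteq>X. card H = m \<and> homogeneous_block D A L r m H)"
      unfolding homogeneous_block_def by blast
    from homogeneous_blocks[OF mpos this, of "{0..<L}"]
    show "\<exists>Hs Q. (\<forall>H\<in>set Hs. homogeneous_block D A L r m H) \<and> card Q < N \<and>
        distinct (concat (map sorted_list_of_set Hs) @ sorted_list_of_set Q) \<and>
        set (concat (map sorted_list_of_set Hs) @ sorted_list_of_set Q) = {0..<L}"
      by blast
  qed
qed

context
  fixes D r A L m Hs Q ps
  assumes la: "local_alg D r A" and D3: "3 \<le> D" and mpos: "0 < m"
    and hs: "\<forall>H\<in>set Hs. homogeneous_block D A L r m H"
    and ps_def: "ps = concat (map sorted_list_of_set Hs) @ sorted_list_of_set Q"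
    and psd: "distinct ps" and pss: "set ps = {0..<L}"
    and L2R: "2 * Suc r < L"
begin

lemma perm_length: "length ps = L"
  using distinct_card[OF psd] pss by simp

lemma perm_is_perm: "is_perm ps"
  unfolding is_perm_def using psd pss perm_length by simp

lemma block_card: "H \<in> set Hs \<Longrightarrow> card H = m"
  using hs unfolding homogeneous_block_def by blast

lemma block_homogeneous:
  "H \<in> set Hs \<Longrightarrow> S \<in> [H]\<^bsup>(2 * Suc r + 1)\<^esup> \<Longrightarrow> T \<in> [H]\<^bsup>(2 * Suc r + 1)\<^esup> \<Longrightarrow>
    choice_pattern D A L r S = choice_pattern D A L r T"
  using hs unfolding homogeneous_block_def by blast

lemma block_finite: "H \<in> set Hs \<Longrightarrow> finite H"
  using block_card mpos card_ge_0_finite by auto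

lemma blocks_length: "length (concat (map sorted_list_of_set Hs)) = length Hs * m"
proof -
  have "\<forall>xs\<in>set (map sorted_list_of_set Hs). length xs = m" using block_card by auto
  from concat_len[OF this] show ?thesis by simp
qed

lemma blocks_fit: "length Hs * m \<le> L"
  using blocks_length perm_length unfolding ps_def by simp

lemma perm_block_nth:
  "j < length Hs \<Longrightarrow> i < m \<Longrightarrow> ps ! (j * m + i) = sorted_list_of_set (Hs ! j) ! i"
proof -
  assume j: "j < length Hs" and i: "i < m"
  have "\<forall>xs\<in>set (map sorted_list_of_set Hs). length xs = m" using block_card by auto
  from concat_nth[OF this, of j i "sorted_list_of_set Q"] j i show ?thesis unfolding ps_def by simp
qed

lemma interior_window:
  assumes dq: "interior m (length Hs) (Suc r) q"
  shows "\<forall>i \<le> 2 * Suc r. ps ! (q - Suc r + i) = canonical_perm L (window Hs m (Suc r) q) ! (0 + i)"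
    and "window Hs m (Suc r) q \<in> [Hs ! (q div m)]\<^bsup>(2 * Suc r + 1)\<^esup>"
    and "q - Suc r + 2 * Suc r < L" and "Suc r \<le> q"
    and "window Hs m (Suc r) q \<subseteq> {0..<L}"
proof -
  define R where "R = Suc r"
  define j where "j = q div m"
  define i0 where "i0 = q mod m"
  define sl where "sl = sorted_list_of_set (Hs ! j)"
  define W where "W = take (2 * R + 1) (drop (i0 - R) sl)"
  have jt: "j < length Hs" and i0: "R \<le> i0" "i0 + R < m"
    using dq unfolding interior_def j_def i0_def R_def by auto
  have Hj: "Hs ! j \<in> set Hs" using jt by simp
  have fH: "finite (Hs ! j)" using block_finite[OF Hj] .
  have lsl: "length sl = m" unfolding sl_def using block_card[OF Hj] by simp
  have lW: "length W = 2 * R + 1" unfolding W_def using lsl i0 by simp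
  have Wn: "W ! i = sl ! (i0 - R + i)" if "i < 2 * R + 1" for i
    unfolding W_def using that lsl i0 by simp
  have q: "q = j * m + i0" unfolding j_def i0_def by simp
  have psw: "ps ! (q - R + i) = W ! i" if "i \<le> 2 * R" for i
  proof -
    have "q - R + i = j * m + (i0 - R + i)" using q i0 by simp
    then show ?thesis using perm_block_nth[OF jt, of "i0 - R + i"] Wn[of i] that i0 sl_def by simp
  qed
  have sW: "sorted W" "distinct W" unfolding W_def sl_def by (auto simp: sorted_wrt_take sorted_wrt_drop)
  have slW: "sorted_list_of_set (set W) = W" using sW by (simp add: sorted_list_of_set.idem_if_sorted_distinct)
  have cW: "card (set W) = 2 * R + 1" using distinct_card[OF sW(2)] lW by simp
  have WH: "set W \<subseteq> Hs ! j" unfolding W_def sl_def using fH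
    by (metis in_set_dropD in_set_takeD set_sorted_list_of_set subsetI)
  have Sw: "window Hs m (Suc r) q = set W" unfolding window_def W_def sl_def R_def j_def i0_def by simp
  show "\<forall>i \<le> 2 * Suc r. ps ! (q - Suc r + i) = canonical_perm L (window Hs m (Suc r) q) ! (0 + i)"
    using psw canonical_perm_nth[of "set W" _ L] cW slW Sw R_def by simp
  show "window Hs m (Suc r) q \<in> [Hs ! (q div m)]\<^bsup>(2 * Suc r + 1)\<^esup>"
    using Sw WH cW unfolding nsets_def R_def j_def by auto
  have "Suc (j * m + i0 + R) \<le> Suc j * m" using i0 by simp
  also have "\<dots> \<le> length Hs * m" using jt by (intro mult_le_mono1) simp
  finally have "q + R < L" using blocks_fit q by linarith
  moreover have "q - Suc r + 2 * Suc r = q + R" using q i0 R_def by simp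
  ultimately show "q - Suc r + 2 * Suc r < L" by simp
  show "Suc r \<le> q" using q i0 R_def by simp
  have "Hs ! j = set (sorted_list_of_set (Hs ! j))" using fH by simp
  also have "\<dots> \<subseteq> set ps" unfolding ps_def using Hj by auto
  finally show "window Hs m (Suc r) q \<subseteq> {0..<L}" using Sw WH pss by auto
qed

(* By locality, the choices at an interior position equal those at the middle position of
   the canonical instance of its window. *)
lemma picks_transfer:
  assumes dq: "interior m (length Hs) (Suc r) q" and aD: "a \<le> D"
  shows "picks_left D A ps q a \<longleftrightarrow>
           picks_left D A (canonical_perm L (window Hs m (Suc r) q)) (Suc r) a"
    and "picks_right D A ps q a \<longleftrightarrow>
           picks_right D A (canonical_perm L (window Hs m (Suc r) q)) (Suc r) a"
proof -
  let ?S = "window Hs m (Suc r) q"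
  let ?c = "canonical_perm L ?S"
  note dw = interior_window[OF dq]
  have cp: "is_perm ?c" "length ?c = L" using canonical_perm_is_perm[OF dw(5)] by auto
  define s where "s = q - Suc r"
  have sq: "s + Suc r = q" using dw(4) s_def by simp
  have win: "\<forall>i \<le> 2 * Suc r. ps ! (s + i) = ?c ! (0 + i)" using dw(1) s_def by simp
  have s2: "s + 2 * Suc r < length ps" using dw(3) s_def perm_length by simp
  have s2': "0 + 2 * Suc r < length ps" using L2R perm_length by simp
  have Aeq: "A (length ps * Suc D) (gadget_graph D ps) (slot_colour D) (vertex_at D ps (s + Suc r) a) =
             A (length ps * Suc D) (gadget_graph D ?c) (slot_colour D) (vertex_at D ps (s + Suc r) a)"
    using local_output_window[OF la D3 perm_is_perm cp(1) _ s2 s2' win aD] cp(2) perm_length by simp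
  have e0: "ps ! q = ?c ! Suc r" using win[rule_format, of "Suc r"] sq by simp
  have qq: "q - 1 = s + r" using sq by simp
  have e1: "ps ! (q - 1) = ?c ! (Suc r - 1)" using win[rule_format, of r] unfolding qq by simp
  have e2: "ps ! Suc q = ?c ! Suc (Suc r)" using win[rule_format, of "Suc (Suc r)"] sq by simp
  have nn: "length ?c * Suc D = length ps * Suc D" using cp(2) perm_length by simp
  show "picks_left D A ps q a \<longleftrightarrow> picks_left D A ?c (Suc r) a"
    unfolding picks_left_def nn using Aeq sq e0 e1 unfolding vertex_at_def by simp
  show "picks_right D A ps q a \<longleftrightarrow> picks_right D A ?c (Suc r) a"
    unfolding picks_right_def nn using Aeq sq e0 e2 unfolding vertex_at_def by simp
qed

(* Homogeneity: at all (r+1)-interior positions of one block the algorithm makes the same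
   choices, since they are read off the colour of a window inside the block. *)
lemma homogeneous_picks:
  assumes q: "interior m (length Hs) (Suc r) q" and q': "interior m (length Hs) (Suc r) q'"
    and blk: "q div m = q' div m" and a: "1 \<le> a" "a \<le> D"
  shows "picks_left D A ps q a \<longleftrightarrow> picks_left D A ps q' a"
    and "picks_right D A ps q a \<longleftrightarrow> picks_right D A ps q' a"
proof -
  have H: "Hs ! (q div m) \<in> set Hs" using q unfolding interior_def by simp
  have "window Hs m (Suc r) q \<in> [Hs ! (q div m)]\<^bsup>(2 * Suc r + 1)\<^esup>"
    and "window Hs m (Suc r) q' \<in> [Hs ! (q div m)]\<^bsup>(2 * Suc r + 1)\<^esup>"
    using interior_window(2)[OF q] interior_window(2)[OF q'] blk by simp_all
  from block_homogeneous[OF H this] have same: "choice_pattern D A L r (window Hs m (Suc r) q) =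
      choice_pattern D A L r (window Hs m (Suc r) q')" .
  have mem: "(a, 0) \<in> choice_pattern D A L r S \<longleftrightarrow> picks_left D A (canonical_perm L S) (Suc r) a"
    "(a, 1) \<in> choice_pattern D A L r S \<longleftrightarrow> picks_right D A (canonical_perm L S) (Suc r) a"
    for S using a unfolding choice_pattern_def by auto
  show "picks_left D A ps q a \<longleftrightarrow> picks_left D A ps q' a"
    using mem(1)[of "window Hs m (Suc r) q"] mem(1)[of "window Hs m (Suc r) q'"] same
      picks_transfer(1)[OF q a(2)] picks_transfer(1)[OF q' a(2)] by metis
  show "picks_right D A ps q a \<longleftrightarrow> picks_right D A ps q' a"
    using mem(2)[of "window Hs m (Suc r) q"] mem(2)[of "window Hs m (Suc r) q'"] same
      picks_transfer(2)[OF q a(2)] picks_transfer(2)[OF q' a(2)] by metis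
qed

(* Hence no layer edge starting deep inside a block is selected: otherwise, by homogeneity,
   the preceding layer edge would be selected too, and two output edges would share the
   vertex at position p. *)
lemma no_interior_path_edge:
  assumes dp: "interior m (length Hs) (Suc (Suc r)) p" and a: "1 \<le> a" "a \<le> D"
    and mt: "matching (gadget_graph D ps) (output_edges A (L * Suc D) (gadget_graph D ps) (slot_colour D))"
  shows "\<not> (picks_right D A ps p a \<and> picks_left D A ps (Suc p) a)"
proof
  assume sel: "picks_right D A ps p a \<and> picks_left D A ps (Suc p) a"
  define j where "j = p div m"
  define i where "i = p mod m"
  have p: "p = j * m + i" unfolding j_def i_def by simp
  have bounds: "j < length Hs" "Suc (Suc r) \<le> i" "i + Suc (Suc r) < m"
    using dp unfolding interior_def j_def i_def by auto
  have near: "interior m (length Hs) (Suc r) q \<and> q div m = j" if "q \<in> {p - 1, p, Suc p}" for q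
  proof -
    define k where "k = q - j * m"
    have q: "q = j * m + k" "k < m" "Suc r \<le> k" "k + Suc r < m"
      using that p bounds unfolding k_def by auto
    show ?thesis unfolding q(1) interior_def using q(2-) bounds by simp
  qed
  have n1: "interior m (length Hs) (Suc r) (p - 1)" "(p - 1) div m = j" using near[of "p - 1"] by simp_all
  have n2: "interior m (length Hs) (Suc r) p" "p div m = j" using near[of p] by simp_all
  have n3: "interior m (length Hs) (Suc r) (Suc p)" "Suc p div m = j" using near[of "Suc p"] by simp_all
  have left: "picks_right D A ps (p - 1) a"
    using homogeneous_picks(2)[OF n1(1) n2(1) _ a] n1(2) n2(2) sel by simp
  have right: "picks_left D A ps p a"
    using homogeneous_picks(1)[OF n2(1) n3(1) _ a] n2(2) n3(2) sel by simp
  have p1: "Suc (p - 1) = p" using p bounds by linarith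
  have pL: "Suc p < length ps" using interior_window(3)[OF n3(1)] perm_length by simp
  let ?out = "output_edges A (L * Suc D) (gadget_graph D ps) (slot_colour D)"
  have e1: "{vertex_at D ps (p - 1) a, vertex_at D ps p a} \<in> ?out"
    using path_edge_in_output[OF perm_is_perm, of "p - 1" a D A] left right a pL p1 perm_length by simp
  have e2: "{vertex_at D ps p a, vertex_at D ps (Suc p) a} \<in> ?out"
    using path_edge_in_output[OF perm_is_perm, of p a D A] sel a pL perm_length by simp
  have "vertex_at D ps (p - 1) a \<noteq> vertex_at D ps p a"
    using vertex_at_inj[OF perm_is_perm, of "p - 1" p a D a] a pL p1 by simp
  moreover have "vertex_at D ps (p - 1) a \<noteq> vertex_at D ps (Suc p) a"
    using vertex_at_inj[OF perm_is_perm, of "p - 1" "Suc p" a D a] a pL by simp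
  ultimately have ne: "{vertex_at D ps (p - 1) a, vertex_at D ps p a} \<noteq>
      {vertex_at D ps p a, vertex_at D ps (Suc p) a}"
    by (metis insertI1 insert_commute insert_iff singletonD)
  have "\<forall>e\<in>?out. \<forall>f\<in>?out. e \<noteq> f \<longrightarrow> e \<inter> f = {}"
    using mt unfolding matching_def by (rule conjunct2)
  from this[rule_format, OF e1 e2 ne] show False by simp
qed

(* Every output edge meets a centre or a leaf at a position that is not deep inside a block:
   a spoke contains a centre, and a layer edge in a matching output cannot start at an
   interior position. *)
lemma output_edge_meets:
  assumes mt: "matching (gadget_graph D ps) (output_edges A (L * Suc D) (gadget_graph D ps) (slot_colour D))"
    and e: "e \<in> output_edges A (L * Suc D) (gadget_graph D ps) (slot_colour D)"
  shows "e \<inter> cover D ps (\<lambda>p. \<not> interior m (length Hs) (Suc (Suc r)) p) \<noteq> {}"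
proof -
  let ?T = "cover D ps (\<lambda>p. \<not> interior m (length Hs) (Suc (Suc r)) p)"
  let ?A = "A (L * Suc D) (gadget_graph D ps) (slot_colour D)"
  obtain u v where uv: "e = {u, v}" "gadget_graph D ps u v" "v \<in> ?A u" "u \<in> ?A v"
    using e unfolding output_edges_def by blast
  obtain p a where pa: "p < L" "a \<le> D" "u = vertex_at D ps p a"
    using vertex_at_surj[OF perm_is_perm, of u D] graph_range[OF uv(2)] perm_length by auto
  obtain q b where qb: "q < L" "b \<le> D" "v = vertex_at D ps q b"
    using vertex_at_surj[OF perm_is_perm, of v D] graph_range[OF uv(2)] perm_length by auto
  have T: "vertex_at D ps p' a' \<in> ?T"
    if "p' < L" "a' \<le> D" "a' = 0 \<or> \<not> interior m (length Hs) (Suc (Suc r)) p'" for p' a'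
    using cover_mem[of p' ps a' D] that perm_length by simp
  have g: "(p = q \<and> (a = 0) \<noteq> (b = 0)) \<or> (a = b \<and> a \<noteq> 0 \<and> (q = Suc p \<or> p = Suc q))"
    using graph_vertex_at[OF perm_is_perm, of p q a D b] uv(2) pa qb perm_length by simp
  have "u \<in> ?T \<or> v \<in> ?T"
  proof (cases "a = 0 \<or> b = 0")
    case True
    then show ?thesis using T pa qb by blast
  next
    case False
    then have ab: "b = a" "1 \<le> a" and "q = Suc p \<or> p = Suc q" using g by auto
    then show ?thesis
    proof (elim disjE)
      assume "q = Suc p"
      then have "picks_right D A ps p a \<and> picks_left D A ps (Suc p) a"
        using uv pa qb ab perm_length unfolding picks_right_def picks_left_def by simp
      then show ?thesis using no_interior_path_edge[OF _ ab(2) pa(2) mt] T pa by blast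
    next
      assume "p = Suc q"
      then have "picks_right D A ps q a \<and> picks_left D A ps (Suc q) a"
        using uv pa qb ab perm_length unfolding picks_right_def picks_left_def by simp
      then show ?thesis using no_interior_path_edge[OF _ ab(2) pa(2) mt] T qb ab by blast
    qed
  qed
  then show ?thesis using uv(1) by blast
qed

(* The output is small: at most one edge per vertex of the cover, i.e. at most L centres
   plus D leaves at each of the few non-interior positions. *)
lemma output_card_bound:
  assumes mt: "matching (gadget_graph D ps) (output_edges A (L * Suc D) (gadget_graph D ps) (slot_colour D))"
  shows "card (output_edges A (L * Suc D) (gadget_graph D ps) (slot_colour D))
           \<le> L + (length Hs * (2 * Suc (Suc r)) + card Q) * D"
proof -
  let ?bad = "\<lambda>p. \<not> interior m (length Hs) (Suc (Suc r)) p"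
  have "finite (cover D ps ?bad)" unfolding cover_def by simp
  then have "card (output_edges A (L * Suc D) (gadget_graph D ps) (slot_colour D)) \<le> card (cover D ps ?bad)"
    using matching_card_le_transversal[OF mt] output_edge_meets[OF mt] by blast
  also have "\<dots> \<le> L + card {p. p < L \<and> ?bad p} * D"
    using card_cover[of D ps ?bad] perm_length by simp
  also have "card {p. p < L \<and> ?bad p} \<le> length Hs * (2 * Suc (Suc r)) + card Q"
    using card_non_interior[OF blocks_fit mpos, of "Suc (Suc r)"] blocks_length perm_length
    unfolding ps_def by simp
  finally show ?thesis by (simp add: add_mono)
qed

end

lemma hard_permutation:
  assumes la: "local_alg D r A" and D3: "3 \<le> D" and mpos: "0 < m"
  obtains N :: nat where "\<And>L. 2 * Suc r < L \<Longrightarrow> \<exists>ps. is_perm ps \<and> length ps = L \<and>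
      (matching (gadget_graph D ps) (output_edges A (L * Suc D) (gadget_graph D ps) (slot_colour D)) \<longrightarrow>
       real (card (output_edges A (L * Suc D) (gadget_graph D ps) (slot_colour D)))
         \<le> real L + real D * (real (2 * Suc (Suc r)) * real L / real m + real N))"
proof -
  obtain N :: nat where blocks: "\<And>L. \<exists>Hs Q. (\<forall>H\<in>set Hs. homogeneous_block D A L r m H) \<and> card Q < N \<and>
      distinct (concat (map sorted_list_of_set Hs) @ sorted_list_of_set Q) \<and>
      set (concat (map sorted_list_of_set Hs) @ sorted_list_of_set Q) = {0..<L}"
    using homogeneous_arrangement[OF mpos] by blast
  show ?thesis
  proof (rule that[of N])
    fix L assume L2R: "2 * Suc r < L"
    obtain Hs Q where HQ: "\<forall>H\<in>set Hs. homogeneous_block D A L r m H" "card Q < N"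
      "distinct (concat (map sorted_list_of_set Hs) @ sorted_list_of_set Q)"
      "set (concat (map sorted_list_of_set Hs) @ sorted_list_of_set Q) = {0..<L}"
      using blocks[of L] by blast
    define ps where "ps = concat (map sorted_list_of_set Hs) @ sorted_list_of_set Q"
    note ctx = la D3 mpos HQ(1) ps_def HQ(3)[folded ps_def] HQ(4)[folded ps_def] L2R
    define t where "t = length Hs"
    have "real t * real m \<le> real L" using blocks_fit[OF ctx] unfolding t_def by (simp flip: of_nat_mult)
    then have t: "real t \<le> real L / real m" using mpos by (simp add: field_simps)
    have "matching (gadget_graph D ps) (output_edges A (L * Suc D) (gadget_graph D ps) (slot_colour D)) \<longrightarrow>
        real (card (output_edges A (L * Suc D) (gadget_graph D ps) (slot_colour D)))
          \<le> real L + real D * (real (2 * Suc (Suc r)) * real L / real m + real N)"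
    proof
      assume "matching (gadget_graph D ps) (output_edges A (L * Suc D) (gadget_graph D ps) (slot_colour D))"
      from output_card_bound[OF ctx this]
      have "real (card (output_edges A (L * Suc D) (gadget_graph D ps) (slot_colour D)))
          \<le> real (L + (t * (2 * Suc (Suc r)) + card Q) * D)"
        unfolding t_def of_nat_le_iff .
      also have "\<dots> = real L + real D * (real (2 * Suc (Suc r)) * real t + real (card Q))"
        by (simp add: algebra_simps)
      also have "\<dots> \<le> real L + real D * (real (2 * Suc (Suc r)) * (real L / real m) + real N)"
        using t HQ(2) by (intro add_left_mono mult_left_mono add_mono) auto
      finally show "real (card (output_edges A (L * Suc D) (gadget_graph D ps) (slot_colour D)))
          \<le> real L + real D * (real (2 * Suc (Suc r)) * real L / real m + real N)" by simp
    qed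
    then show "\<exists>ps. is_perm ps \<and> length ps = L \<and>
        (matching (gadget_graph D ps) (output_edges A (L * Suc D) (gadget_graph D ps) (slot_colour D)) \<longrightarrow>
         real (card (output_edges A (L * Suc D) (gadget_graph D ps) (slot_colour D)))
           \<le> real L + real D * (real (2 * Suc (Suc r)) * real L / real m + real N))"
      using perm_is_perm[OF ctx] perm_length[OF ctx] by blast
  qed
qed

lemma guarantee_on_hard_instance:
  assumes la: "local_alg D r A" and ap: "approx_matching_alg D \<alpha> A" and D3: "3 \<le> D" and mpos: "0 < m"
  obtains N :: nat where "\<And>L. 2 * Suc r < L \<Longrightarrow> even L \<Longrightarrow> \<exists>Z. 0 \<le> Z \<and>
      Z \<le> real L + real D * (real (2 * Suc (Suc r)) * real L / real m + real N) \<and>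
      (real D + 1) / 2 * real L \<le> \<alpha> * Z"
proof -
  obtain N :: nat where hard: "\<And>L. 2 * Suc r < L \<Longrightarrow> \<exists>ps. is_perm ps \<and> length ps = L \<and>
      (matching (gadget_graph D ps) (output_edges A (L * Suc D) (gadget_graph D ps) (slot_colour D)) \<longrightarrow>
       real (card (output_edges A (L * Suc D) (gadget_graph D ps) (slot_colour D)))
         \<le> real L + real D * (real (2 * Suc (Suc r)) * real L / real m + real N))"
    using hard_permutation[OF la D3 mpos] by blast
  show ?thesis
  proof (rule that[of N])
    fix L :: nat assume L: "2 * Suc r < L" "even L"
    then obtain ps where ps: "is_perm ps" "length ps = L" and small:
      "matching (gadget_graph D ps) (output_edges A (L * Suc D) (gadget_graph D ps) (slot_colour D)) \<longrightarrow>
       real (card (output_edges A (L * Suc D) (gadget_graph D ps) (slot_colour D)))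
         \<le> real L + real D * (real (2 * Suc (Suc r)) * real L / real m + real N)"
      using hard by blast
    let ?out = "output_edges A (L * Suc D) (gadget_graph D ps) (slot_colour D)"
    have "matching (gadget_graph D ps) ?out \<and> real (max_matching_size (gadget_graph D ps)) \<le> \<alpha> * real (card ?out)"
      using ap[unfolded approx_matching_alg_def, rule_format, OF gadget_graph_instance[OF ps(1) D3]]
      unfolding ps(2) by (elim conjE) (intro conjI)
    moreover have "(real D + 1) / 2 * real L \<le> real (max_matching_size (gadget_graph D ps))"
      using max_matching_lower_bound[OF ps(1), of D] ps(2) L(2) D3 by (simp add: mult.commute)
    ultimately show "\<exists>Z. 0 \<le> Z \<and>
        Z \<le> real L + real D * (real (2 * Suc (Suc r)) * real L / real m + real N) \<and>
        (real D + 1) / 2 * real L \<le> \<alpha> * Z"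
      using small by (intro exI[of _ "real (card ?out)"]) auto
  qed
qed

lemma ratio_gap_contradiction:
  fixes c \<epsilon> d k N m L Z :: real
  assumes pos: "0 < c" "0 < \<epsilon>" "0 \<le> d" "0 \<le> k" "0 \<le> N"
    and m: "2 * (c * d * k) < \<epsilon> * m" and L: "2 * (c * d * N) < \<epsilon> * L"
    and Z: "0 \<le> Z" "Z \<le> L + d * (k * L / m + N)"
    and approx: "c * L \<le> (c - \<epsilon>) * Z"
  shows False
proof -
  have "0 \<le> 2 * (c * d * k)" "0 \<le> 2 * (c * d * N)" using pos by simp_all
  then have "0 < \<epsilon> * m" "0 < \<epsilon> * L" using m L by linarith+
  then have mpos: "0 < m" and Lpos: "0 < L" using pos(2) by (simp_all add: zero_less_mult_iff)
  define X where "X = d * (k * L / m + N)"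
  have X: "0 \<le> X" unfolding X_def using pos mpos Lpos by simp
  have "c * d * k / m < \<epsilon> / 2" using m mpos by (simp add: field_simps)
  then have "c * d * k / m * L < \<epsilon> / 2 * L" using Lpos by (rule mult_strict_right_mono)
  moreover have "c * X = c * d * k / m * L + c * d * N" unfolding X_def using mpos by (simp add: field_simps)
  ultimately have small: "c * X < \<epsilon> * L" using L by linarith
  show False
  proof (cases "c - \<epsilon> \<le> 0")
    case True
    then have "(c - \<epsilon>) * Z \<le> 0" using Z(1) by (simp add: mult_nonpos_nonneg)
    moreover have "0 < c * L" using pos(1) Lpos by simp
    ultimately show False using approx by linarith
  next
    case False
    then have "(c - \<epsilon>) * Z \<le> (c - \<epsilon>) * (L + X)" using Z(2) unfolding X_def by simp
    also have "\<dots> \<le> c * L + c * X - \<epsilon> * L" using pos(2) X by (simp add: algebra_simps)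
    finally show False using approx small by linarith
  qed
qed

theorem theorem4:
  fixes \<Delta> :: nat and \<epsilon> :: real
  assumes "\<Delta> \<ge> 3" and "\<epsilon> > 0"
  shows "\<not> (\<exists>(r::nat) (A::algorithm). local_alg \<Delta> r A \<and>
             approx_matching_alg \<Delta> ((real \<Delta> + 1) / 2 - \<epsilon>) A)"
proof
  assume "\<exists>(r::nat) (A::algorithm). local_alg \<Delta> r A \<and> approx_matching_alg \<Delta> ((real \<Delta> + 1) / 2 - \<epsilon>) A"
  then obtain r A where la: "local_alg \<Delta> r A" and ap: "approx_matching_alg \<Delta> ((real \<Delta> + 1) / 2 - \<epsilon>) A"
    by blast
  let ?c = "(real \<Delta> + 1) / 2" and ?k = "real (2 * Suc (Suc r))"
  have pos: "0 < ?c" "0 \<le> real \<Delta>" "0 \<le> ?k" by simp_all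
  obtain m :: nat where m: "2 * (?c * \<Delta> * ?k) < \<epsilon> * m"
    using reals_Archimedean3[OF assms(2)] by (metis mult.commute)
  have "0 \<le> 2 * (?c * \<Delta> * ?k)" by simp
  with m have "0 < \<epsilon> * m" by linarith
  then have "0 < m" using assms(2) by (simp add: zero_less_mult_iff)
  from guarantee_on_hard_instance[OF la ap assms(1) this] obtain N :: nat where guarantee:
    "\<And>L. 2 * Suc r < L \<Longrightarrow> even L \<Longrightarrow> \<exists>Z. 0 \<le> Z \<and>
       Z \<le> real L + real \<Delta> * (?k * real L / real m + real N) \<and> ?c * real L \<le> (?c - \<epsilon>) * Z"
    by blast
  obtain n :: nat where "2 * (?c * \<Delta> * N) < \<epsilon> * n"
    using reals_Archimedean3[OF assms(2)] by (metis mult.commute)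
  define L where "L = 2 * (n + Suc (Suc r))"
  have "\<epsilon> * n \<le> \<epsilon> * real L" using assms(2) unfolding L_def by simp
  with \<open>2 * (?c * \<Delta> * N) < \<epsilon> * n\<close> have large: "2 * (?c * \<Delta> * N) < \<epsilon> * real L" by linarith
  have "2 * Suc r < L" "even L" unfolding L_def by simp_all
  from guarantee[OF this] obtain Z where "0 \<le> Z"
    "Z \<le> real L + real \<Delta> * (?k * real L / real m + real N)" "?c * real L \<le> (?c - \<epsilon>) * Z"
    by blast
  with ratio_gap_contradiction[OF pos(1) assms(2) pos(2,3) of_nat_0_le_iff m large] show False by blast
qed

end
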